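(* Let $q \in \mathbb R_+$ be given. Then for a given $2$-tensor ${\bf T}:\Omega\to\mathbb M^{3\times3}$ and any $i,j\in\{1,2,3\}$ the following commutation identities hold: \[ \partial_r\Big[ \frac{1}{ w^q} ( w^{1+q} {\bf T}^k_i),_k \Big] = \frac{1}{ w^{1+q}} ( w^{2+q} \partial_r {\bf T}^k_i),_k + \mathcal C_i^{q+1}[{\bf T}], \] \[ \not\nabla_j\Big[ \frac{1}{ w^q} ( w^{1+q} {\bf T}^k_i),_k \Big] = \frac{1}{ w^{q}} ( w^{1+q} \not\nabla_j{\bf T}^k_i),_k + \mathcal C_{ij}^{q}[{\bf T}], \] where \[ \mathcal C_i^{q+1}[{\bf T}] = \Big(\partial_r w-\frac{ w}{r}\Big)\not\nabla_k {\bf T}^k_i+(1+q) \partial_r w,_k {\bf T}^k_i, \] \[ \mathcal C_{ij}^{q}[{\bf T}]= w \Big(\frac{y_j\not\nabla_k}{r^2} + \frac{\delta_{kj}r^2- y_k y_j}{r^3}\partial_r \Big){\bf T}^k_i + (1+q)\not\nabla_j w,_k{\bf T}^k_i \quad \text{for } j=1,2,3. \]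
   Context: Here $\Omega=B_1(\mathbf 0)\subset\mathbb R^3$, $\delta>0$, $\gamma>1$, $\alpha=\frac1{\gamma-1}$, and $w(y)=\frac{\delta(\gamma-1)}{2\gamma}(1-|y|^2)=\frac{\delta}{2(1+\alpha)}(1-r^2)$, $r=|y|$. Einstein summation is used and $F,_k=\partial_{y_k}F$. $\partial_r=\frac yr\cdot\nabla$, and $\not\nabla$ denotes the angular gradient $\not\nabla f=\nabla f-\frac yr\partial_r f$, with components $\not\nabla_i=\frac{y_j(y_j\partial_i-y_i\partial_j)}{r^2}$. *)

theory Defs
  imports "HOL-Analysis.Analysis"
begin

definition pd :: "3 \<Rightarrow> (real^3 \<Rightarrow> real) \<Rightarrow> real^3 \<Rightarrow> real" where
  "pd k f y = deriv (\<lambda>t. f (y + t *\<^sub>R axis k 1)) 0"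

definition dr :: "(real^3 \<Rightarrow> real) \<Rightarrow> real^3 \<Rightarrow> real" where
  "dr f y = (\<Sum>j\<in>UNIV. (y $ j / norm y) * pd j f y)"

definition ang :: "3 \<Rightarrow> (real^3 \<Rightarrow> real) \<Rightarrow> real^3 \<Rightarrow> real" where
  "ang i f y = pd i f y - (y $ i / norm y) * dr f y"

definition wgt :: "real \<Rightarrow> real \<Rightarrow> real^3 \<Rightarrow> real" where
  "wgt \<delta> \<gamma> y = \<delta> * (\<gamma> - 1) / (2 * \<gamma>) * (1 - (norm y)\<^sup>2)"

definition C2_on :: "(real^3) set \<Rightarrow> (real^3 \<Rightarrow> real) \<Rightarrow> bool" where
  "C2_on S f \<longleftrightarrow> (\<forall>y\<in>S. f differentiable (at y)) \<and>
     (\<forall>k. \<forall>y\<in>S. pd k f differentiable (at y)) \<and>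
     (\<forall>k l. continuous_on S (pd l (pd k f)))"

definition comp :: "(real^3 \<Rightarrow> real^3^3) \<Rightarrow> 3 \<Rightarrow> 3 \<Rightarrow> real^3 \<Rightarrow> real" where
  "comp T k i = (\<lambda>y. T y $ k $ i)"

end

theory Submission
  imports Defs
begin

text \<open>Expanding the weighted divergence,
  \<open>(w^(1+q) T^k_i),_k / w^q = w T^k_i,_k + (1+q) w,_k T^k_i\<close>, the Leibniz rule reduces both
  identities to the commutators of \<open>\<partial>_k\<close> with the radial and angular derivatives:
  \<open>\<partial>_k \<partial>_r f = \<partial>_r \<partial>_k f + ang_k f / r\<close> and
  \<open>\<partial>_k ang_j f = ang_j \<partial>_k f - (y_j/r^2) ang_k f - \<partial>_k(y_j/r) \<partial>_r f\<close>,
  which rest on the symmetry of second derivatives (Schwarz). The only property of the weight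
  that enters is that it is radial at the point, \<open>w,_k = (y_k/r) \<partial>_r w\<close>; so the identities
  hold for every positive \<open>C^2\<close> weight whose angular gradient vanishes at \<open>y\<close>, and every
  real \<open>q\<close>.\<close>

lemma has_real_derivative_along_line:
  assumes "(f has_derivative f') (at (z + s *\<^sub>R v))"
  shows "((\<lambda>t. f (z + t *\<^sub>R v)) has_real_derivative f' v) (at s)"
proof -
  have "((\<lambda>t. z + t *\<^sub>R v) has_derivative (\<lambda>t. t *\<^sub>R v)) (at s)"
    by (auto intro!: derivative_eq_intros)
  from diff_chain_at[OF this assms]
  have "((\<lambda>t. f (z + t *\<^sub>R v)) has_derivative (\<lambda>t. f' (t *\<^sub>R v))) (at s)"
    by (simp add: o_def)
  moreover have "(\<lambda>t. f' (t *\<^sub>R v)) = (*) (f' v)"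
    using linear_cmul[OF has_derivative_linear[OF assms]] by (auto simp: mult.commute)
  ultimately show ?thesis
    unfolding has_field_derivative_def by simp
qed

lemma pd_eq_derivative:
  assumes "(f has_derivative f') (at y)"
  shows "pd k f y = f' (axis k 1)"
  unfolding pd_def using has_real_derivative_along_line[of f f' y 0] assms
  by (intro DERIV_imp_deriv) simp

lemma has_real_derivative_along_axis:
  assumes "f differentiable (at (z + s *\<^sub>R axis k 1))"
  shows "((\<lambda>t. f (z + t *\<^sub>R axis k 1)) has_real_derivative pd k f (z + s *\<^sub>R axis k 1)) (at s)"
proof -
  have "(f has_derivative frechet_derivative f (at (z + s *\<^sub>R axis k 1))) (at (z + s *\<^sub>R axis k 1))"
    using assms frechet_derivative_works by blast
  from has_real_derivative_along_line[OF this] pd_eq_derivative[OF this, of k] show ?thesis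
    by simp
qed

lemma pd_add:
  assumes "f differentiable (at y)" "g differentiable (at y)"
  shows "pd k (\<lambda>x. f x + g x) y = pd k f y + pd k g y"
proof -
  have f: "(f has_derivative frechet_derivative f (at y)) (at y)"
    and g: "(g has_derivative frechet_derivative g (at y)) (at y)"
    using assms frechet_derivative_works by blast+
  show ?thesis
    using pd_eq_derivative[OF has_derivative_add[OF f g]]
      pd_eq_derivative[OF f] pd_eq_derivative[OF g] by simp
qed

lemma pd_diff:
  assumes "f differentiable (at y)" "g differentiable (at y)"
  shows "pd k (\<lambda>x. f x - g x) y = pd k f y - pd k g y"
proof -
  have f: "(f has_derivative frechet_derivative f (at y)) (at y)"
    and g: "(g has_derivative frechet_derivative g (at y)) (at y)"
    using assms frechet_derivative_works by blast+
  show ?thesis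
    using pd_eq_derivative[OF has_derivative_diff[OF f g]]
      pd_eq_derivative[OF f] pd_eq_derivative[OF g] by simp
qed

lemma pd_mult:
  assumes "f differentiable (at y)" "g differentiable (at y)"
  shows "pd k (\<lambda>x. f x * g x) y = f y * pd k g y + pd k f y * g y"
proof -
  have f: "(f has_derivative frechet_derivative f (at y)) (at y)"
    and g: "(g has_derivative frechet_derivative g (at y)) (at y)"
    using assms frechet_derivative_works by blast+
  show ?thesis
    using pd_eq_derivative[OF has_derivative_mult[OF f g]]
      pd_eq_derivative[OF f] pd_eq_derivative[OF g] by simp
qed

lemma pd_sum:
  assumes "finite I" "\<And>a. a \<in> I \<Longrightarrow> f a differentiable (at y)"
  shows "pd k (\<lambda>x. \<Sum>a\<in>I. f a x) y = (\<Sum>a\<in>I. pd k (f a) y)"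
proof -
  have f: "\<And>a. a \<in> I \<Longrightarrow> (f a has_derivative frechet_derivative (f a) (at y)) (at y)"
    using assms(2) frechet_derivative_works by blast
  then have "((\<lambda>x. \<Sum>a\<in>I. f a x) has_derivative
      (\<lambda>h. \<Sum>a\<in>I. frechet_derivative (f a) (at y) h)) (at y)"
    by (rule has_derivative_sum)
  then show ?thesis
    using pd_eq_derivative[OF f] by (simp add: pd_eq_derivative)
qed

lemma pd_const: "pd k (\<lambda>x. c) y = 0"
  using pd_eq_derivative[OF has_derivative_const] by simp

lemma pd_component: "pd k (\<lambda>x. x $ l) y = (if l = k then 1 else 0)"
  using pd_eq_derivative[OF bounded_linear_imp_has_derivative[OF bounded_linear_vec_nth]]
  by (simp add: axis_def)

lemma differentiable_component [simp]: "(\<lambda>x::real^'n. x $ l) differentiable F"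
  using bounded_linear_vec_nth bounded_linear_imp_differentiable by blast

lemma pd_chain:
  assumes "(g has_real_derivative g') (at (f y))" "f differentiable (at y)"
  shows "pd k (\<lambda>x. g (f x)) y = g' * pd k f y"
proof -
  obtain f' where f': "(f has_derivative f') (at y)"
    using assms(2) differentiable_def by blast
  have "((\<lambda>x. g (f x)) has_derivative (\<lambda>h. g' * f' h)) (at y)"
    using diff_chain_at[OF f' assms(1)[unfolded has_field_derivative_def]]
    by (simp add: o_def mult.commute)
  then show ?thesis using pd_eq_derivative f' by metis
qed

lemma pd_powr:
  assumes "f differentiable (at y)" "f y > 0"
  shows "pd k (\<lambda>x. f x powr a) y = a * f y powr (a - 1) * pd k f y"
  using pd_chain[OF DERIV_fun_powr[OF DERIV_ident assms(2)] assms(1)] by simp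

lemma pd_divide:
  assumes "f differentiable (at y)" "g differentiable (at y)" "g y \<noteq> 0"
  shows "pd k (\<lambda>x. f x / g x) y = (pd k f y * g y - f y * pd k g y) / (g y)\<^sup>2"
proof -
  have "pd k (\<lambda>x. inverse (g x)) y = - inverse ((g y)\<^sup>2) * pd k g y"
    using pd_chain[OF DERIV_inverse[OF assms(3)] assms(2)] by (simp add: power2_eq_square)
  moreover have "pd k (\<lambda>x. f x / g x) y
      = f y * pd k (\<lambda>x. inverse (g x)) y + pd k f y * inverse (g y)"
    unfolding divide_inverse using assms by (intro pd_mult) auto
  ultimately show ?thesis
    using assms(3) by (simp add: field_simps power2_eq_square)
qed

lemma pd_norm:
  assumes "y \<noteq> 0"
  shows "pd k norm y = y $ k / norm y"
  using pd_eq_derivative[OF has_derivative_norm[OF assms], of k]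
  by (simp add: inner_axis' sgn_div_norm divide_inverse mult.commute)

lemma pd_cong_open:
  assumes "open S" "y \<in> S" "\<And>z. z \<in> S \<Longrightarrow> f z = g z"
  shows "pd k f y = pd k g y"
  unfolding pd_def
proof (rule deriv_cong_ev)
  have "open ((\<lambda>t::real. y + t *\<^sub>R axis k 1) -` S)"
    by (intro continuous_open_vimage assms(1)) (intro continuous_intros)
  then have "\<forall>\<^sub>F t in nhds 0. y + t *\<^sub>R axis k 1 \<in> S"
    using assms(2) eventually_nhds_in_open by fastforce
  then show "\<forall>\<^sub>F t in nhds 0. f (y + t *\<^sub>R axis k 1) = g (y + t *\<^sub>R axis k 1)"
    by eventually_elim (use assms(3) in auto)
qed simp

lemma differentiable_powr:
  fixes f :: "'a::real_normed_vector \<Rightarrow> real"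
  assumes "f differentiable (at y)" "f y > 0"
  shows "(\<lambda>x. f x powr a) differentiable (at y)"
proof -
  obtain f' where "(f has_derivative f') (at y)"
    using assms(1) differentiable_def by blast
  from has_derivative_powr[OF this has_derivative_const assms(2), of a]
  show ?thesis by (auto intro: differentiableI)
qed

lemma mixed_difference_mvt:
  fixes f :: "real^3 \<Rightarrow> real"
  assumes h: "h > 0"
    and sq: "\<And>s t. 0 \<le> s \<Longrightarrow> s \<le> h \<Longrightarrow> 0 \<le> t \<Longrightarrow> t \<le> h
               \<Longrightarrow> y + s *\<^sub>R axis k 1 + t *\<^sub>R axis l 1 \<in> S"
    and df: "\<And>z. z \<in> S \<Longrightarrow> f differentiable (at z)"
    and dpf: "\<And>z. z \<in> S \<Longrightarrow> pd k f differentiable (at z)"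
  shows "\<exists>s t. 0 < s \<and> s < h \<and> 0 < t \<and> t < h \<and>
    f (y + h *\<^sub>R axis k 1 + h *\<^sub>R axis l 1) - f (y + h *\<^sub>R axis k 1)
      - f (y + h *\<^sub>R axis l 1) + f y
    = h * (h * pd l (pd k f) (y + s *\<^sub>R axis k 1 + t *\<^sub>R axis l 1))"
proof -
  let ?u = "axis k 1 :: real^3" and ?v = "axis l 1 :: real^3"
  define g where "g s = f ((y + h *\<^sub>R ?v) + s *\<^sub>R ?u) - f (y + s *\<^sub>R ?u)" for s
  have "DERIV g s :> pd k f ((y + h *\<^sub>R ?v) + s *\<^sub>R ?u) - pd k f (y + s *\<^sub>R ?u)"
    if "0 \<le> s" "s \<le> h" for s
  proof -
    have "y + h *\<^sub>R ?v + s *\<^sub>R ?u \<in> S"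
      using sq[of s h] that h by (simp add: algebra_simps)
    moreover have "y + s *\<^sub>R ?u \<in> S"
      using sq[of s 0] that h by simp
    ultimately show ?thesis
      unfolding g_def by (intro DERIV_diff has_real_derivative_along_axis df)
  qed
  from MVT2[OF h this] obtain s where s: "0 < s" "s < h"
    and gs: "g h - g 0 = (h - 0) * (pd k f ((y + h *\<^sub>R ?v) + s *\<^sub>R ?u) - pd k f (y + s *\<^sub>R ?u))"
    by blast
  define \<phi> where "\<phi> t = pd k f ((y + s *\<^sub>R ?u) + t *\<^sub>R ?v)" for t
  have "DERIV \<phi> t :> pd l (pd k f) ((y + s *\<^sub>R ?u) + t *\<^sub>R ?v)" if "0 \<le> t" "t \<le> h" for t
    unfolding \<phi>_def using s that by (intro has_real_derivative_along_axis dpf sq) auto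
  from MVT2[OF h this] obtain t where t: "0 < t" "t < h"
    and pt: "\<phi> h - \<phi> 0 = (h - 0) * pd l (pd k f) ((y + s *\<^sub>R ?u) + t *\<^sub>R ?v)"
    by blast
  have "f (y + h *\<^sub>R ?u + h *\<^sub>R ?v) - f (y + h *\<^sub>R ?u) - f (y + h *\<^sub>R ?v) + f y = g h - g 0"
    unfolding g_def by (simp add: algebra_simps)
  also have "\<dots> = h * (\<phi> h - \<phi> 0)"
    using gs unfolding \<phi>_def by (simp add: algebra_simps)
  also have "\<dots> = h * (h * pd l (pd k f) (y + s *\<^sub>R ?u + t *\<^sub>R ?v))"
    using pt by simp
  finally show ?thesis using s t by blast
qed

text \<open>The second difference of \<open>f\<close> over a square is symmetric in the two directions, so the
  mean value theorem, applied in either order, yields both mixed partials.\<close>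

lemma mixed_partials_meet:
  fixes f :: "real^3 \<Rightarrow> real"
  assumes h: "h > 0"
    and sq: "\<And>s t a b. 0 \<le> s \<Longrightarrow> s \<le> h \<Longrightarrow> 0 \<le> t \<Longrightarrow> t \<le> h
               \<Longrightarrow> y + s *\<^sub>R axis a 1 + t *\<^sub>R axis b 1 \<in> S"
    and df: "\<And>z. z \<in> S \<Longrightarrow> f differentiable (at z)"
    and dpf: "\<And>m z. z \<in> S \<Longrightarrow> pd m f differentiable (at z)"
  shows "\<exists>s1 t1 s2 t2. 0 < s1 \<and> s1 < h \<and> 0 < t1 \<and> t1 < h \<and> 0 < s2 \<and> s2 < h \<and> 0 < t2 \<and> t2 < h \<and>
    pd l (pd k f) (y + s1 *\<^sub>R axis k 1 + t1 *\<^sub>R axis l 1)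
    = pd k (pd l f) (y + s2 *\<^sub>R axis l 1 + t2 *\<^sub>R axis k 1)"
proof -
  obtain s1 t1 where st1: "0 < s1" "s1 < h" "0 < t1" "t1 < h"
    and mvt1: "f (y + h *\<^sub>R axis k 1 + h *\<^sub>R axis l 1) - f (y + h *\<^sub>R axis k 1)
                 - f (y + h *\<^sub>R axis l 1) + f y
               = h * (h * pd l (pd k f) (y + s1 *\<^sub>R axis k 1 + t1 *\<^sub>R axis l 1))"
    using mixed_difference_mvt[OF h sq df dpf] by blast
  obtain s2 t2 where st2: "0 < s2" "s2 < h" "0 < t2" "t2 < h"
    and mvt2: "f (y + h *\<^sub>R axis l 1 + h *\<^sub>R axis k 1) - f (y + h *\<^sub>R axis l 1)
                 - f (y + h *\<^sub>R axis k 1) + f y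
               = h * (h * pd k (pd l f) (y + s2 *\<^sub>R axis l 1 + t2 *\<^sub>R axis k 1))"
    using mixed_difference_mvt[OF h sq df dpf] by blast
  have swap: "y + h *\<^sub>R axis l 1 + h *\<^sub>R axis k 1 = y + h *\<^sub>R axis k 1 + h *\<^sub>R axis l 1"
    by (simp add: algebra_simps)
  have "h * (h * pd l (pd k f) (y + s1 *\<^sub>R axis k 1 + t1 *\<^sub>R axis l 1))
      = h * (h * pd k (pd l f) (y + s2 *\<^sub>R axis l 1 + t2 *\<^sub>R axis k 1))"
    using mvt1 mvt2[unfolded swap] by linarith
  then show ?thesis
    using h st1 st2 by auto
qed

lemma dist_axis_steps_le:
  fixes y :: "real^'n"
  assumes "0 \<le> s" "0 \<le> t"
  shows "dist (y + s *\<^sub>R axis a 1 + t *\<^sub>R axis b 1) y \<le> s + t"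
proof -
  have "dist (y + s *\<^sub>R axis a 1 + t *\<^sub>R axis b 1) y
      = norm (s *\<^sub>R axis a 1 + t *\<^sub>R (axis b 1 :: real^'n))"
    by (simp add: dist_norm)
  also have "\<dots> \<le> norm (s *\<^sub>R (axis a 1 :: real^'n)) + norm (t *\<^sub>R (axis b 1 :: real^'n))"
    by (rule norm_triangle_ineq)
  finally show ?thesis using assms by simp
qed

lemma pd_commute:
  assumes S: "open S" "y \<in> S" and f: "C2_on S f"
  shows "pd l (pd k f) y = pd k (pd l f) y"
proof (rule ccontr)
  let ?A = "pd l (pd k f) y" and ?B = "pd k (pd l f) y"
  assume "?A \<noteq> ?B"
  define \<epsilon> where "\<epsilon> = \<bar>?A - ?B\<bar> / 3"
  have "\<epsilon> > 0" using \<open>?A \<noteq> ?B\<close> by (simp add: \<epsilon>_def)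
  have df: "\<And>z. z \<in> S \<Longrightarrow> f differentiable (at z)"
    and dpf: "\<And>m z. z \<in> S \<Longrightarrow> pd m f differentiable (at z)"
    and cont: "\<And>m n. continuous_on S (pd n (pd m f))"
    using f unfolding C2_on_def by blast+
  obtain d1 where "d1 > 0"
    and d1: "\<And>z. z \<in> S \<Longrightarrow> dist z y < d1 \<Longrightarrow> dist (pd l (pd k f) z) ?A < \<epsilon>"
    using cont[where m=k and n=l] S(2) \<open>\<epsilon> > 0\<close> unfolding continuous_on_iff by metis
  obtain d2 where "d2 > 0"
    and d2: "\<And>z. z \<in> S \<Longrightarrow> dist z y < d2 \<Longrightarrow> dist (pd k (pd l f) z) ?B < \<epsilon>"
    using cont[where m=l and n=k] S(2) \<open>\<epsilon> > 0\<close> unfolding continuous_on_iff by metis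
  obtain e where "e > 0" "ball y e \<subseteq> S" using S openE by blast
  define h where "h = min (min d1 d2) e / 3"
  have "h > 0" using \<open>d1 > 0\<close> \<open>d2 > 0\<close> \<open>e > 0\<close> by (simp add: h_def)
  have near: "dist (y + s *\<^sub>R axis a 1 + t *\<^sub>R axis b 1) y < min (min d1 d2) e"
    if "0 \<le> s" "s \<le> h" "0 \<le> t" "t \<le> h" for s t and a b :: 3
    using dist_axis_steps_le[of s t y a b] that \<open>h > 0\<close> unfolding h_def by linarith
  have inS: "y + s *\<^sub>R axis a 1 + t *\<^sub>R axis b 1 \<in> S"
    if "0 \<le> s" "s \<le> h" "0 \<le> t" "t \<le> h" for s t and a b :: 3
    using near[OF that, of a b] \<open>ball y e \<subseteq> S\<close> by (auto simp: dist_commute)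
  obtain s1 t1 s2 t2 where st: "0 < s1" "s1 < h" "0 < t1" "t1 < h" "0 < s2" "s2 < h" "0 < t2" "t2 < h"
    and eq: "pd l (pd k f) (y + s1 *\<^sub>R axis k 1 + t1 *\<^sub>R axis l 1)
             = pd k (pd l f) (y + s2 *\<^sub>R axis l 1 + t2 *\<^sub>R axis k 1)"
    using mixed_partials_meet[OF \<open>h > 0\<close> inS df dpf] by blast
  have "dist (pd l (pd k f) (y + s1 *\<^sub>R axis k 1 + t1 *\<^sub>R axis l 1)) ?A < \<epsilon>"
    using st near[of s1 t1 k l] inS[of s1 t1 k l] by (intro d1) auto
  moreover have "dist (pd k (pd l f) (y + s2 *\<^sub>R axis l 1 + t2 *\<^sub>R axis k 1)) ?B < \<epsilon>"
    using st near[of s2 t2 l k] inS[of s2 t2 l k] by (intro d2) auto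
  ultimately have "\<bar>?A - ?B\<bar> < 2 * \<epsilon>"
    using eq by (simp add: dist_real_def)
  then show False using \<open>\<epsilon> > 0\<close> unfolding \<epsilon>_def by simp
qed

lemma pd_component_div_norm:
  assumes "y \<noteq> 0"
  shows "pd k (\<lambda>x. x $ j / norm x) y
       = ((if k = j then 1 else 0) * (norm y)\<^sup>2 - y $ k * y $ j) / norm y ^ 3"
  using assms
  by (simp add: pd_divide pd_component pd_norm field_simps power2_eq_square power3_eq_cube)

lemma dr_cong_open:
  assumes "open S" "y \<in> S" "\<And>z. z \<in> S \<Longrightarrow> f z = g z"
  shows "dr f y = dr g y"
  using pd_cong_open[OF assms] by (simp add: dr_def)

lemma ang_cong_open:
  assumes "open S" "y \<in> S" "\<And>z. z \<in> S \<Longrightarrow> f z = g z"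
  shows "ang k f y = ang k g y"
  using pd_cong_open[OF assms] dr_cong_open[OF assms] by (simp add: ang_def)

lemma dr_const: "dr (\<lambda>x. c) y = 0"
  by (simp add: dr_def pd_const)

lemma dr_add:
  assumes "f differentiable (at y)" "g differentiable (at y)"
  shows "dr (\<lambda>x. f x + g x) y = dr f y + dr g y"
  using assms by (simp add: dr_def pd_add distrib_left sum.distrib)

lemma dr_mult:
  assumes "f differentiable (at y)" "g differentiable (at y)"
  shows "dr (\<lambda>x. f x * g x) y = f y * dr g y + dr f y * g y"
  using assms
  by (simp add: dr_def pd_mult sum.distrib sum_distrib_left sum_distrib_right algebra_simps)

lemma dr_sum:
  assumes "finite I" "\<And>a. a \<in> I \<Longrightarrow> f a differentiable (at y)"
  shows "dr (\<lambda>x. \<Sum>a\<in>I. f a x) y = (\<Sum>a\<in>I. dr (f a) y)"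
  using assms by (simp add: dr_def pd_sum sum_distrib_left sum.swap[of _ I])

lemma ang_const: "ang k (\<lambda>x. c) y = 0"
  by (simp add: ang_def pd_const dr_const)

lemma ang_add:
  assumes "f differentiable (at y)" "g differentiable (at y)"
  shows "ang k (\<lambda>x. f x + g x) y = ang k f y + ang k g y"
  using assms by (simp add: ang_def pd_add dr_add algebra_simps)

lemma ang_mult:
  assumes "f differentiable (at y)" "g differentiable (at y)"
  shows "ang k (\<lambda>x. f x * g x) y = f y * ang k g y + ang k f y * g y"
  using assms by (simp add: ang_def pd_mult dr_mult algebra_simps)

lemma ang_sum:
  assumes "finite I" "\<And>a. a \<in> I \<Longrightarrow> f a differentiable (at y)"
  shows "ang k (\<lambda>x. \<Sum>a\<in>I. f a x) y = (\<Sum>a\<in>I. ang k (f a) y)"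
  using assms by (simp add: ang_def pd_sum dr_sum sum_distrib_left sum_subtractf)

lemma differentiable_dr:
  assumes "y \<noteq> 0" "\<And>j. pd j f differentiable (at y)"
  shows "dr f differentiable (at y)"
  using assms unfolding dr_def by simp

lemma differentiable_ang:
  assumes "y \<noteq> 0" "\<And>j. pd j f differentiable (at y)"
  shows "ang k f differentiable (at y)"
  using assms unfolding ang_def dr_def by simp

lemma pd_dr_commute:
  assumes "open S" "y \<in> S" "y \<noteq> 0" "C2_on S f"
  shows "pd k (dr f) y = dr (pd k f) y + ang k f y / norm y"
proof -
  have df: "\<And>j. pd j f differentiable (at y)"
    using assms unfolding C2_on_def by blast
  have "pd k (dr f) y = (\<Sum>j\<in>UNIV. pd k (\<lambda>x. x $ j / norm x * pd j f x) y)"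
    unfolding dr_def using assms df by (intro pd_sum) auto
  also have "\<dots> = (\<Sum>j\<in>UNIV. pd k (\<lambda>x. x $ j / norm x) y * pd j f y
                                + y $ j / norm y * pd j (pd k f) y)"
    using assms df
    by (intro sum.cong refl, subst pd_mult) (auto simp: pd_commute[OF assms(1,2,4)])
  also have "\<dots> = (\<Sum>j\<in>UNIV. (if k = j then 1 else 0) * pd j f y / norm y
                                - y $ k / (norm y)\<^sup>2 * (y $ j / norm y * pd j f y)
                                + y $ j / norm y * pd j (pd k f) y)"
    using assms by (intro sum.cong refl)
      (simp add: pd_component_div_norm field_simps power2_eq_square power3_eq_cube)
  also have "\<dots> = pd k f y / norm y - y $ k / (norm y)\<^sup>2 * dr f y + dr (pd k f) y"
    by (simp add: dr_def sum.distrib sum_subtractf sum_distrib_left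
        sum_divide_distrib[symmetric] of_bool_def[symmetric])
  finally show ?thesis
    using assms by (simp add: ang_def field_simps power2_eq_square)
qed

lemma pd_ang_commute:
  assumes "open S" "y \<in> S" "y \<noteq> 0" "C2_on S f"
  shows "pd k (ang j f) y = ang j (pd k f) y - y $ j / (norm y)\<^sup>2 * ang k f y
                           - pd k (\<lambda>x. x $ j / norm x) y * dr f y"
proof -
  have df: "f differentiable (at y)" "\<And>j. pd j f differentiable (at y)"
    using assms unfolding C2_on_def by blast+
  have "pd k (ang j f) y = pd k (pd j f) y - (y $ j / norm y * pd k (dr f) y
                                            + pd k (\<lambda>x. x $ j / norm x) y * dr f y)"
    unfolding ang_def
    using assms df differentiable_dr[OF assms(3) df(2)]
      pd_diff[of "pd j f" y "\<lambda>x. x $ j / norm x * dr f x" k]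
      pd_mult[of "\<lambda>x. x $ j / norm x" y "dr f" k]
    by simp
  also have "\<dots> = pd j (pd k f) y - (y $ j / norm y * (dr (pd k f) y + ang k f y / norm y)
                                     + pd k (\<lambda>x. x $ j / norm x) y * dr f y)"
    by (simp add: pd_dr_commute[OF assms] pd_commute[OF assms(1,2,4)])
  also have "\<dots> = ang j (pd k f) y - y $ j / (norm y)\<^sup>2 * ang k f y
                  - pd k (\<lambda>x. x $ j / norm x) y * dr f y"
    using assms(3) by (simp add: ang_def field_simps power2_eq_square)
  finally show ?thesis .
qed

text \<open>The exponent \<open>b = 1 + a\<close> is a separate variable so that the lemma matches \<open>w^(2+q)\<close>
  with \<open>a = 1 + q\<close> without rewriting the numeral.\<close>

lemma weighted_divergence_expand:
  assumes "w y > 0" "w differentiable (at y)" "\<And>k. g k differentiable (at y)" "b = 1 + a"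
  shows "1 / w y powr a * (\<Sum>k\<in>UNIV. pd k (\<lambda>x. w x powr b * g k x) y)
       = (\<Sum>k\<in>UNIV. w y * pd k (g k) y + b * pd k w y * g k y)"
proof -
  have "w y powr b = w y * w y powr a" and "w y powr (b - 1) = w y powr a"
    using assms(1,4) by (simp_all add: powr_add)
  then have "pd k (\<lambda>x. w x powr b * g k x) y
      = w y powr a * (w y * pd k (g k) y + b * pd k w y * g k y)" for k
    using assms by (simp add: pd_mult pd_powr differentiable_powr algebra_simps)
  then show ?thesis
    using assms(1) by (simp add: sum_distrib_left)
qed

context
  fixes w :: "real^3 \<Rightarrow> real" and g :: "3 \<Rightarrow> real^3 \<Rightarrow> real"
    and S :: "(real^3) set" and y :: "real^3"
  assumes S: "open S" "y \<in> S" and "y \<noteq> 0"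
    and w_pos: "\<And>z. z \<in> S \<Longrightarrow> w z > 0" and w_C2: "C2_on S w"
    and w_radial: "\<And>k. ang k w y = 0"
    and g_C2: "\<And>k. C2_on S (g k)"
begin

lemma regular_at_point:
  "w y > 0" "w differentiable (at y)" "pd k w differentiable (at y)"
  "g k differentiable (at y)" "pd m (g k) differentiable (at y)"
  using S w_pos w_C2 g_C2 unfolding C2_on_def by auto

lemma weighted_divergence_on:
  "z \<in> S \<Longrightarrow> 1 / w z powr q * (\<Sum>k\<in>UNIV. pd k (\<lambda>x. w x powr (1 + q) * g k x) z)
             = (\<Sum>k\<in>UNIV. w z * pd k (g k) z + (1 + q) * pd k w z * g k z)"
  using w_pos w_C2 g_C2 unfolding C2_on_def by (intro weighted_divergence_expand) auto

lemma radial_pd_weight: "pd k w y = y $ k / norm y * dr w y"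
  using w_radial[of k] unfolding ang_def by simp

lemma dr_weighted_divergence_commute:
  "dr (\<lambda>z. (1 / w z powr q) * (\<Sum>k\<in>UNIV. pd k (\<lambda>x. w x powr (1 + q) * g k x) z)) y
   = (1 / w y powr (1 + q)) * (\<Sum>k\<in>UNIV. pd k (\<lambda>x. w x powr (2 + q) * dr (g k) x) y)
     + ((dr w y - w y / norm y) * (\<Sum>k\<in>UNIV. ang k (g k) y)
        + (1 + q) * (\<Sum>k\<in>UNIV. dr (pd k w) y * g k y))"
  (is "?lhs = ?rhs")
proof -
  have "?lhs = dr (\<lambda>z. \<Sum>k\<in>UNIV. w z * pd k (g k) z + (1 + q) * pd k w z * g k z) y"
    using S weighted_divergence_on by (rule dr_cong_open)
  also have "\<dots> = (\<Sum>k\<in>UNIV. w y * dr (pd k (g k)) y + dr w y * pd k (g k) y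
                      + (1 + q) * (pd k w y * dr (g k) y + dr (pd k w) y * g k y))"
    using regular_at_point by (simp add: dr_sum dr_add dr_mult dr_const algebra_simps)
  also have "\<dots> = (\<Sum>k\<in>UNIV. w y * (dr (pd k (g k)) y + ang k (g k) y / norm y)
                      + (2 + q) * pd k w y * dr (g k) y
                      + (dr w y - w y / norm y) * ang k (g k) y
                      + (1 + q) * (dr (pd k w) y * g k y))"
    using \<open>y \<noteq> 0\<close>
    by (intro sum.cong refl) (simp add: ang_def radial_pd_weight field_simps)
  also have "\<dots> = ?rhs"
  proof -
    have "1 / w y powr (1 + q) * (\<Sum>k\<in>UNIV. pd k (\<lambda>x. w x powr (2 + q) * dr (g k) x) y)
        = (\<Sum>k\<in>UNIV. w y * pd k (dr (g k)) y + (2 + q) * pd k w y * dr (g k) y)"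
      using regular_at_point \<open>y \<noteq> 0\<close>
      by (intro weighted_divergence_expand differentiable_dr) auto
    then show ?thesis
      using S \<open>y \<noteq> 0\<close> g_C2 by (simp add: pd_dr_commute sum.distrib sum_distrib_left)
  qed
  finally show ?thesis .
qed

lemma ang_weighted_divergence_commute:
  "ang j (\<lambda>z. (1 / w z powr q) * (\<Sum>k\<in>UNIV. pd k (\<lambda>x. w x powr (1 + q) * g k x) z)) y
   = (1 / w y powr q) * (\<Sum>k\<in>UNIV. pd k (\<lambda>x. w x powr (1 + q) * ang j (g k) x) y)
     + (w y * (\<Sum>k\<in>UNIV. (y $ j / (norm y)\<^sup>2) * ang k (g k) y
                + (((if k = j then 1 else 0) * (norm y)\<^sup>2 - y $ k * y $ j) / (norm y) ^ 3)
                  * dr (g k) y)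
        + (1 + q) * (\<Sum>k\<in>UNIV. ang j (pd k w) y * g k y))"
  (is "?lhs = ?rhs")
proof -
  have "?lhs = ang j (\<lambda>z. \<Sum>k\<in>UNIV. w z * pd k (g k) z + (1 + q) * pd k w z * g k z) y"
    using S weighted_divergence_on by (rule ang_cong_open)
  also have "\<dots> = (\<Sum>k\<in>UNIV. w y * ang j (pd k (g k)) y
                      + (1 + q) * (pd k w y * ang j (g k) y + ang j (pd k w) y * g k y))"
    using regular_at_point w_radial by (simp add: ang_sum ang_add ang_mult ang_const algebra_simps)
  also have "\<dots> = (\<Sum>k\<in>UNIV. w y * (ang j (pd k (g k)) y
                                    - y $ j / (norm y)\<^sup>2 * ang k (g k) y
                                    - pd k (\<lambda>x. x $ j / norm x) y * dr (g k) y)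
                      + (1 + q) * pd k w y * ang j (g k) y
                      + w y * (y $ j / (norm y)\<^sup>2 * ang k (g k) y
                               + pd k (\<lambda>x. x $ j / norm x) y * dr (g k) y)
                      + (1 + q) * (ang j (pd k w) y * g k y))"
    by (intro sum.cong refl) (simp add: algebra_simps)
  also have "\<dots> = ?rhs"
  proof -
    have "1 / w y powr q * (\<Sum>k\<in>UNIV. pd k (\<lambda>x. w x powr (1 + q) * ang j (g k) x) y)
        = (\<Sum>k\<in>UNIV. w y * pd k (ang j (g k)) y + (1 + q) * pd k w y * ang j (g k) y)"
      using regular_at_point \<open>y \<noteq> 0\<close>
      by (intro weighted_divergence_expand differentiable_ang) auto
    then show ?thesis
      using S \<open>y \<noteq> 0\<close> g_C2
      by (simp add: pd_ang_commute pd_component_div_norm sum.distrib sum_distrib_left distrib_left)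
  qed
  finally show ?thesis .
qed

end

lemma wgt_eq_sum:
  "wgt \<delta> \<gamma> = (\<lambda>z. \<delta> * (\<gamma> - 1) / (2 * \<gamma>) * (1 - (\<Sum>l\<in>UNIV. z $ l * z $ l)))"
  by (auto simp: wgt_def power2_norm_eq_inner inner_vec_def fun_eq_iff)

lemma pd_quadratic:
  "pd k (\<lambda>z. c * (1 - (\<Sum>l\<in>UNIV. z $ l * z $ l))) z = - 2 * c * z $ k"
proof -
  have "(\<Sum>l\<in>UNIV. pd k (\<lambda>z. z $ l * z $ l) z) = 2 * z $ k"
    by (simp add: pd_mult pd_component sum.distrib of_bool_def[symmetric]
        mult.commute[of "z $ _"] sum_distrib_left[symmetric])
  then show ?thesis
    by (simp add: pd_mult pd_diff pd_const pd_sum)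
qed

lemma differentiable_wgt [simp]: "wgt \<delta> \<gamma> differentiable (at z)"
  unfolding wgt_eq_sum by (intro differentiable_mult differentiable_diff differentiable_sum) auto

lemma pd_wgt: "pd k (wgt \<delta> \<gamma>) = (\<lambda>z. - (\<delta> * (\<gamma> - 1) / \<gamma>) * z $ k)"
  unfolding wgt_eq_sum pd_quadratic by simp

lemma C2_on_wgt: "C2_on S (wgt \<delta> \<gamma>)"
proof -
  define c where "c = - (\<delta> * (\<gamma> - 1) / \<gamma>)"
  have "\<And>k. pd k (wgt \<delta> \<gamma>) = (\<lambda>z. c * z $ k)"
    unfolding pd_wgt c_def ..
  then show ?thesis
    unfolding C2_on_def by (simp add: pd_mult pd_const pd_component)
qed

lemma wgt_pos:
  assumes "\<delta> > 0" "\<gamma> > 1" "z \<in> ball 0 1"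
  shows "wgt \<delta> \<gamma> z > 0"
proof -
  have "(norm z)\<^sup>2 < 1"
    using assms(3) by (simp add: abs_square_less_1)
  then show ?thesis
    using assms(1,2) by (simp add: wgt_def)
qed

lemma ang_wgt:
  assumes "y \<noteq> 0"
  shows "ang k (wgt \<delta> \<gamma>) y = 0"
proof -
  define c where "c = - (\<delta> * (\<gamma> - 1) / \<gamma>)"
  have pd_w: "\<And>k. pd k (wgt \<delta> \<gamma>) = (\<lambda>z. c * z $ k)"
    unfolding pd_wgt c_def ..
  have "dr (wgt \<delta> \<gamma>) y = c / norm y * (\<Sum>j\<in>UNIV. y $ j * y $ j)"
    unfolding dr_def pd_w by (simp add: sum_distrib_left algebra_simps)
  also have "(\<Sum>j\<in>UNIV. y $ j * y $ j) = (norm y)\<^sup>2"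
    by (simp add: power2_norm_eq_inner inner_vec_def)
  also have "c / norm y * (norm y)\<^sup>2 = c * norm y"
    using assms by (simp add: power2_eq_square)
  finally show ?thesis
    using assms by (simp add: ang_def pd_w)
qed

theorem lemma4p3:
  fixes \<delta> \<gamma> q :: real and T :: "real^3 \<Rightarrow> real^3^3" and i j :: 3 and y :: "real^3"
  assumes "\<delta> > 0" and "\<gamma> > 1" and "q > 0"
    and "\<And>k l. C2_on (ball 0 1) (comp T k l)"
    and "y \<in> ball 0 1" and "y \<noteq> 0"
  shows
   "(dr (\<lambda>z. (1 / wgt \<delta> \<gamma> z powr q) *
          (\<Sum>k\<in>UNIV. pd k (\<lambda>x. wgt \<delta> \<gamma> x powr (1 + q) * comp T k i x) z)) y
    = (1 / wgt \<delta> \<gamma> y powr (1 + q)) *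
          (\<Sum>k\<in>UNIV. pd k (\<lambda>x. wgt \<delta> \<gamma> x powr (2 + q) * dr (comp T k i) x) y)
      + ((dr (wgt \<delta> \<gamma>) y - wgt \<delta> \<gamma> y / norm y) * (\<Sum>k\<in>UNIV. ang k (comp T k i) y)
         + (1 + q) * (\<Sum>k\<in>UNIV. dr (pd k (wgt \<delta> \<gamma>)) y * comp T k i y)))
   \<and>
   (ang j (\<lambda>z. (1 / wgt \<delta> \<gamma> z powr q) *
          (\<Sum>k\<in>UNIV. pd k (\<lambda>x. wgt \<delta> \<gamma> x powr (1 + q) * comp T k i x) z)) y
    = (1 / wgt \<delta> \<gamma> y powr q) *
          (\<Sum>k\<in>UNIV. pd k (\<lambda>x. wgt \<delta> \<gamma> x powr (1 + q) * ang j (comp T k i) x) y)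
      + (wgt \<delta> \<gamma> y *
           (\<Sum>k\<in>UNIV. (y $ j / (norm y)\<^sup>2) * ang k (comp T k i) y
              + (((if k = j then 1 else 0) * (norm y)\<^sup>2 - y $ k * y $ j) / (norm y) ^ 3)
                * dr (comp T k i) y)
         + (1 + q) * (\<Sum>k\<in>UNIV. ang j (pd k (wgt \<delta> \<gamma>)) y * comp T k i y)))"
proof -
  have w_pos: "\<And>z. z \<in> ball 0 1 \<Longrightarrow> wgt \<delta> \<gamma> z > 0"
    using assms(1,2) by (rule wgt_pos)
  note hyps = open_ball assms(5,6) w_pos C2_on_wgt ang_wgt[OF assms(6)] assms(4)
  show ?thesis
    using dr_weighted_divergence_commute[where w = "wgt \<delta> \<gamma>" and g = "\<lambda>k. comp T k i", OF hyps]
      ang_weighted_divergence_commute[where w = "wgt \<delta> \<gamma>" and g = "\<lambda>k. comp T k i", OF hyps]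
    by blast
qed

end
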